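(* Let $g:\mathbb{R}^d\to\mathbb{C}$ be a function and let $A$ be a real invertible $d\times d$ matrix. Then: (i) If the series $\sum_{j=-\infty}^{\infty} g(A^j\gamma)$ converges for every $\gamma\in\mathbb{R}^d\setminus\{0\}$, then there exists a function $\varphi:\mathbb{R}^d\to\mathbb{C}$ such that $$g(\gamma)=\varphi(\gamma)-\varphi(A\gamma)\quad\text{for all }\gamma\in\mathbb{R}^d\setminus\{0\}. \qquad ( * )$$ (ii) Conversely, let $\varphi:\mathbb{R}^d\to\mathbb{C}$ be any function such that $( * )$ holds. Then for each fixed $\gamma\in\mathbb{R}^d\setminus\{0\}$, the series $\sum_{j=-\infty}^{\infty} g(A^j\gamma)$ converges if and only if both limits $\lim_{N\to\infty}\varphi(A^N\gamma)$ and $\lim_{N\to-\infty}\varphi(A^N\gamma)$ exist. (iii) Let $\varphi:\mathbb{R}^d\to\mathbb{C}$ be any function such that $( * )$ holds. Then $$\sum_{j=-\infty}^{\infty} g(A^j\gamma)=1\quad\text{for all }\gamma\in\mathbb{R}^d\setminus\{0\}$$ holds if and only if, for every $\gamma\in\mathbb{R}^d\setminus\{0\}$, both limits $\lim_{N\to\pm\infty}\varphi(A^N\gamma)$ exist and $$\lim_{N\to-\infty}\varphi(A^N\gamma)-\lim_{N\to\infty}\varphi(A^N\gamma)=1.$$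
   Context: Convergence of a bilateral series $\sum_{j=-\infty}^\infty a_j$ means that the partial sums $\sum_{j=-M}^{N} a_j$ converge as $M,N\to\infty$ (independently). *)

theory Defs
  imports "HOL-Analysis.Analysis"
begin

definition mat_int_pow_apply :: "real^'n^'n \<Rightarrow> int \<Rightarrow> real^'n \<Rightarrow> real^'n" where
  "mat_int_pow_apply A j x =
     (if 0 \<le> j then ((\<lambda>v. A *v v) ^^ nat j) x
      else ((\<lambda>v. matrix_inv A *v v) ^^ nat (- j)) x)"

definition bilateral_sums :: "(int \<Rightarrow> 'a::real_normed_vector) \<Rightarrow> 'a \<Rightarrow> bool" where
  "bilateral_sums a s \<longleftrightarrow>
     ((\<lambda>(M::nat, N::nat). \<Sum>j\<in>{- int M..int N}. a j) \<longlongrightarrow> s) (sequentially \<times>\<^sub>F sequentially)"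

definition bilateral_summable :: "(int \<Rightarrow> 'a::real_normed_vector) \<Rightarrow> bool" where
  "bilateral_summable a \<longleftrightarrow> (\<exists>s. bilateral_sums a s)"

end

theory Submission
  imports Defs
begin

(* If g = phi - phi o A, then along the orbit of gamma we have g(A^j gamma) = b(j) - b(j+1) with
   b(j) = phi(A^j gamma), so the partial sum over [-M, N] telescopes to b(-M) - b(N+1). A double
   limit of f(M) - h(N) exists iff f and h both converge, since each of them is then Cauchy; this
   gives (ii) and (iii). For (i), phi(gamma) = sum over j >= 0 of g(A^j gamma) is a solution. *)

lemma sum_atLeastAtMost_int_telescope:
  fixes b :: "int \<Rightarrow> 'a::ab_group_add"
  assumes "m - 1 \<le> n"
  shows "(\<Sum>j\<in>{m..n}. b j - b (j + 1)) = b m - b (n + 1)"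
  using assms
proof (induction n rule: int_ge_induct)
  case (step i)
  have "{m..i + 1} = insert (i + 1) {m..i}" using step.hyps by auto
  then show ?case using step.IH by simp
qed simp

lemma sum_atLeastAtMost_int_split_nonneg:
  fixes a :: "int \<Rightarrow> 'a::comm_monoid_add"
  shows "(\<Sum>j\<in>{- int M..int N}. a j) = (\<Sum>j\<in>{- int M..-1}. a j) + (\<Sum>n\<le>N. a (int n))"
proof -
  have "x \<in> {- int M..int N} \<longleftrightarrow> x \<in> {- int M..-1} \<union> int ` {..N}" for x
    by (cases "x < 0") (auto simp: image_iff intro!: bexI[of _ "nat x"])
  then have "{- int M..int N} = {- int M..-1} \<union> int ` {..N}" by blast
  also have "sum a \<dots> = sum a {- int M..-1} + sum a (int ` {..N})"
    by (rule sum.union_disjoint) auto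
  finally show ?thesis by (simp add: sum.reindex)
qed

lemma Cauchy_of_tendsto_prod_diff:
  fixes f h :: "nat \<Rightarrow> 'a::real_normed_vector"
  assumes "((\<lambda>(M, N). f M - h N) \<longlongrightarrow> s) (sequentially \<times>\<^sub>F sequentially)"
  shows "Cauchy f"
proof (rule metric_CauchyI)
  fix e :: real assume "e > 0"
  from tendstoD[OF assms, of "e / 2"] this obtain K
    where K: "\<And>m n. K \<le> m \<Longrightarrow> K \<le> n \<Longrightarrow> dist (f m - h n) s < e / 2"
    unfolding eventually_prod_sequentially by auto
  have "dist (f m) (f n) < e" if "K \<le> m" "K \<le> n" for m n
  proof -
    have "dist (f m) (f n) = dist (f m - h K) (f n - h K)"
      by (simp add: dist_norm)
    also have "\<dots> \<le> dist (f m - h K) s + dist (f n - h K) s"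
      by (rule dist_triangle2)
    finally show ?thesis using K[OF that(1) order_refl] K[OF that(2) order_refl] by linarith
  qed
  then show "\<exists>K. \<forall>m\<ge>K. \<forall>n\<ge>K. dist (f m) (f n) < e" by blast
qed

lemma tendsto_prod_diff_sequentially_iff:
  fixes f h :: "nat \<Rightarrow> 'a::banach"
  shows "((\<lambda>(M, N). f M - h N) \<longlongrightarrow> s) (sequentially \<times>\<^sub>F sequentially) \<longleftrightarrow>
         (\<exists>Lf Lh. f \<longlonglongrightarrow> Lf \<and> h \<longlonglongrightarrow> Lh \<and> s = Lf - Lh)"
    (is "?lim s \<longleftrightarrow> _")
proof
  have lim_diff: "?lim (Lf - Lh)" if "f \<longlonglongrightarrow> Lf" "h \<longlonglongrightarrow> Lh" for Lf Lh
    using tendsto_diff[OF filterlim_compose[OF that(1) filterlim_fst]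
                          filterlim_compose[OF that(2) filterlim_snd]]
    by (simp add: case_prod_beta')
  then show "\<exists>Lf Lh. f \<longlonglongrightarrow> Lf \<and> h \<longlonglongrightarrow> Lh \<and> s = Lf - Lh \<Longrightarrow> ?lim s" by blast
  assume lim: "?lim s"
  have "((\<lambda>(N, M). h N - f M) \<longlongrightarrow> - s) (sequentially \<times>\<^sub>F sequentially)"
    using tendsto_minus[OF lim]
    by (subst prod_filter_commute) (simp add: filterlim_filtermap case_prod_beta')
  then have "Cauchy f" "Cauchy h"
    using Cauchy_of_tendsto_prod_diff lim by blast+
  then obtain Lf Lh where "f \<longlonglongrightarrow> Lf" "h \<longlonglongrightarrow> Lh"
    unfolding Cauchy_convergent_iff convergent_def by blast
  moreover from this have "s = Lf - Lh"
    using tendsto_unique[OF _ lim lim_diff] by (simp add: prod_filter_eq_bot)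
  ultimately show "\<exists>Lf Lh. f \<longlonglongrightarrow> Lf \<and> h \<longlonglongrightarrow> Lh \<and> s = Lf - Lh" by blast
qed

lemma tendsto_at_top_int_iff_sequentially:
  fixes b :: "int \<Rightarrow> 'a::topological_space"
  shows "(b \<longlongrightarrow> L) at_top \<longleftrightarrow> (\<lambda>n. b (int n)) \<longlonglongrightarrow> L"
  using filterlim_int_of_nat_at_topD[of b] filterlim_compose[OF _ filterlim_int_sequentially, of b]
  by blast

lemma tendsto_at_bot_int_iff_sequentially:
  fixes b :: "int \<Rightarrow> 'a::topological_space"
  shows "(b \<longlongrightarrow> L) at_bot \<longleftrightarrow> (\<lambda>n. b (- int n)) \<longlonglongrightarrow> L"
proof -
  have "(b \<longlongrightarrow> L) at_bot \<longleftrightarrow> ((\<lambda>j. b (- j)) \<longlongrightarrow> L) at_top"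
    unfolding filterlim_def at_bot_mirror filtermap_filtermap by (simp add: o_def)
  then show ?thesis by (simp add: tendsto_at_top_int_iff_sequentially)
qed

lemma bilateral_sums_telescope_iff:
  fixes b :: "int \<Rightarrow> 'a::banach"
  shows "bilateral_sums (\<lambda>j. b j - b (j + 1)) s \<longleftrightarrow>
         (\<exists>Lp Lm. (b \<longlongrightarrow> Lp) at_top \<and> (b \<longlongrightarrow> Lm) at_bot \<and> Lm - Lp = s)"
proof -
  have "bilateral_sums (\<lambda>j. b j - b (j + 1)) s \<longleftrightarrow>
        ((\<lambda>(M, N). b (- int M) - b (int (Suc N))) \<longlongrightarrow> s) (sequentially \<times>\<^sub>F sequentially)"
    unfolding bilateral_sums_def by (simp add: sum_atLeastAtMost_int_telescope add.commute)
  also have "\<dots> \<longleftrightarrow> (\<exists>Lm Lp. (\<lambda>M. b (- int M)) \<longlonglongrightarrow> Lm \<and> (\<lambda>N. b (int (Suc N))) \<longlonglongrightarrow> Lp \<and> s = Lm - Lp)"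
    by (rule tendsto_prod_diff_sequentially_iff)
  also have "\<dots> \<longleftrightarrow> (\<exists>Lp Lm. (b \<longlongrightarrow> Lp) at_top \<and> (b \<longlongrightarrow> Lm) at_bot \<and> Lm - Lp = s)"
    unfolding tendsto_at_bot_int_iff_sequentially tendsto_at_top_int_iff_sequentially
      filterlim_sequentially_Suc[of "\<lambda>n. b (int n)"]
    by auto
  finally show ?thesis .
qed

lemma bilateral_summable_imp_summable_nonneg:
  fixes a :: "int \<Rightarrow> 'a::banach"
  assumes "bilateral_summable a"
  shows "summable (\<lambda>n. a (int n))"
proof -
  obtain s where "bilateral_sums a s" using assms unfolding bilateral_summable_def by blast
  then have "((\<lambda>(M, N). (\<Sum>j\<in>{- int M..-1}. a j) - - (\<Sum>n\<le>N. a (int n))) \<longlongrightarrow> s)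
              (sequentially \<times>\<^sub>F sequentially)"
    unfolding bilateral_sums_def sum_atLeastAtMost_int_split_nonneg by simp
  then have "convergent (\<lambda>N. - (\<Sum>n\<le>N. a (int n)))"
    unfolding tendsto_prod_diff_sequentially_iff convergent_def by blast
  then show ?thesis
    unfolding summable_iff_convergent' by (simp add: convergent_minus_iff[symmetric])
qed

lemma matrix_inv_cancels:
  fixes A :: "'a::semiring_1^'n^'n"
  assumes "invertible A"
  shows "A ** matrix_inv A = mat 1" "matrix_inv A ** A = mat 1"
  using someI_ex[OF assms[unfolded invertible_def]] unfolding matrix_inv_def by auto

lemma mat_int_pow_apply_0 [simp]: "mat_int_pow_apply A 0 x = x"
  unfolding mat_int_pow_apply_def by simp

lemma mat_int_pow_apply_of_nat_Suc:
  "mat_int_pow_apply A (int (Suc n)) x = mat_int_pow_apply A (int n) (A *v x)"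
  unfolding mat_int_pow_apply_def by (simp only: nat_int of_nat_0_le_iff if_True funpow_Suc_right o_apply)

lemma mat_int_pow_apply_add1:
  fixes A :: "real^'n^'n"
  assumes "invertible A"
  shows "mat_int_pow_apply A (j + 1) x = A *v mat_int_pow_apply A j x"
proof (cases "0 \<le> j")
  case True
  then have "nat (j + 1) = Suc (nat j)" by simp
  with True show ?thesis by (simp add: mat_int_pow_apply_def)
next
  case False
  define B where "B = matrix_inv A"
  have "nat (- j) = Suc (nat (- (j + 1)))" using False by simp
  then have "mat_int_pow_apply A j x = B *v mat_int_pow_apply A (j + 1) x"
    using False unfolding mat_int_pow_apply_def B_def by (cases "j + 1 = 0") auto
  then show ?thesis
    using matrix_inv_cancels[OF assms] by (simp add: B_def matrix_vector_mul_assoc)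
qed

lemma mat_int_pow_apply_nonzero:
  fixes A :: "real^'n^'n"
  assumes "invertible A" "x \<noteq> 0"
  shows "mat_int_pow_apply A j x \<noteq> 0"
proof (induction j rule: int_induct[where k = 0])
  case (step1 i)
  have "mat_int_pow_apply A i x = matrix_inv A *v mat_int_pow_apply A (i + 1) x"
    by (simp add: mat_int_pow_apply_add1[OF assms(1)] matrix_vector_mul_assoc
        matrix_inv_cancels(2)[OF assms(1)])
  with step1.IH show ?case by (metis matrix_vector_mult_0_right)
next
  case (step2 i)
  have "mat_int_pow_apply A i x = A *v mat_int_pow_apply A (i - 1) x"
    using mat_int_pow_apply_add1[OF assms(1), of "i - 1" x] by simp
  with step2.IH show ?case by (metis matrix_vector_mult_0_right)
qed (simp add: assms(2))

lemma coboundary_of_summable_orbit: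
  fixes A :: "real^'n^'n" and g :: "real^'n \<Rightarrow> 'a::real_normed_vector"
  assumes "summable (\<lambda>n. g (mat_int_pow_apply A (int n) x))"
  shows "g x = (\<Sum>n. g (mat_int_pow_apply A (int n) x))
             - (\<Sum>n. g (mat_int_pow_apply A (int n) (A *v x)))"
  using suminf_split_head[OF assms] by (simp add: mat_int_pow_apply_of_nat_Suc[symmetric])

lemma coboundary_exists_if_bilateral_summable:
  fixes A :: "real^'n^'n" and g :: "real^'n \<Rightarrow> 'a::banach"
  assumes "\<forall>x. x \<noteq> 0 \<longrightarrow> bilateral_summable (\<lambda>j. g (mat_int_pow_apply A j x))"
  shows "\<exists>\<phi>. \<forall>x. x \<noteq> 0 \<longrightarrow> g x = \<phi> x - \<phi> (A *v x)"
proof -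
  define \<phi> where "\<phi> x = (\<Sum>n. g (mat_int_pow_apply A (int n) x))" for x
  have "g x = \<phi> x - \<phi> (A *v x)" if "x \<noteq> 0" for x
    unfolding \<phi>_def
    by (rule coboundary_of_summable_orbit bilateral_summable_imp_summable_nonneg)+
      (use assms that in simp)
  then show ?thesis by (intro exI[of _ \<phi>]) blast
qed

lemma bilateral_sums_orbit_iff:
  fixes A :: "real^'n^'n" and \<phi> g :: "real^'n \<Rightarrow> 'a::banach"
  assumes "invertible A" and cob: "\<forall>y. y \<noteq> 0 \<longrightarrow> g y = \<phi> y - \<phi> (A *v y)" and "x \<noteq> 0"
  shows "bilateral_sums (\<lambda>j. g (mat_int_pow_apply A j x)) s \<longleftrightarrow>
         (\<exists>Lp Lm. ((\<lambda>N. \<phi> (mat_int_pow_apply A N x)) \<longlongrightarrow> Lp) at_top \<and>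
                  ((\<lambda>N. \<phi> (mat_int_pow_apply A N x)) \<longlongrightarrow> Lm) at_bot \<and> Lm - Lp = s)"
proof -
  have "(\<lambda>j. g (mat_int_pow_apply A j x)) =
        (\<lambda>j. \<phi> (mat_int_pow_apply A j x) - \<phi> (mat_int_pow_apply A (j + 1) x))"
    using cob mat_int_pow_apply_nonzero[OF assms(1,3)]
    by (simp add: mat_int_pow_apply_add1[OF assms(1)])
  then show ?thesis
    by (simp add: bilateral_sums_telescope_iff[of "\<lambda>j. \<phi> (mat_int_pow_apply A j x)"])
qed

lemma bilateral_summable_orbit_iff:
  fixes A :: "real^'n^'n" and \<phi> g :: "real^'n \<Rightarrow> 'a::banach"
  assumes "invertible A" and "\<forall>y. y \<noteq> 0 \<longrightarrow> g y = \<phi> y - \<phi> (A *v y)" and "x \<noteq> 0"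
  shows "bilateral_summable (\<lambda>j. g (mat_int_pow_apply A j x)) \<longleftrightarrow>
         (\<exists>L. ((\<lambda>N. \<phi> (mat_int_pow_apply A N x)) \<longlongrightarrow> L) at_top) \<and>
         (\<exists>L. ((\<lambda>N. \<phi> (mat_int_pow_apply A N x)) \<longlongrightarrow> L) at_bot)"
  unfolding bilateral_summable_def bilateral_sums_orbit_iff[OF assms] by blast

theorem theorem2p1:
  fixes g :: "real^'n \<Rightarrow> complex" and A :: "real^'n^'n"
  assumes "invertible A"
  shows "((\<forall>\<gamma>. \<gamma> \<noteq> 0 \<longrightarrow> bilateral_summable (\<lambda>j. g (mat_int_pow_apply A j \<gamma>)))
            \<longrightarrow> (\<exists>\<phi> :: real^'n \<Rightarrow> complex. \<forall>\<gamma>. \<gamma> \<noteq> 0 \<longrightarrow> g \<gamma> = \<phi> \<gamma> - \<phi> (A *v \<gamma>)))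
       \<and> (\<forall>\<phi> :: real^'n \<Rightarrow> complex. (\<forall>\<gamma>. \<gamma> \<noteq> 0 \<longrightarrow> g \<gamma> = \<phi> \<gamma> - \<phi> (A *v \<gamma>)) \<longrightarrow>
            (\<forall>\<gamma>. \<gamma> \<noteq> 0 \<longrightarrow>
               (bilateral_summable (\<lambda>j. g (mat_int_pow_apply A j \<gamma>)) \<longleftrightarrow>
                 ((\<exists>L. ((\<lambda>N::int. \<phi> (mat_int_pow_apply A N \<gamma>)) \<longlongrightarrow> L) at_top) \<and>
                  (\<exists>L. ((\<lambda>N::int. \<phi> (mat_int_pow_apply A N \<gamma>)) \<longlongrightarrow> L) at_bot)))))
       \<and> (\<forall>\<phi> :: real^'n \<Rightarrow> complex. (\<forall>\<gamma>. \<gamma> \<noteq> 0 \<longrightarrow> g \<gamma> = \<phi> \<gamma> - \<phi> (A *v \<gamma>)) \<longrightarrow>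
            ((\<forall>\<gamma>. \<gamma> \<noteq> 0 \<longrightarrow> bilateral_sums (\<lambda>j. g (mat_int_pow_apply A j \<gamma>)) 1) \<longleftrightarrow>
             (\<forall>\<gamma>. \<gamma> \<noteq> 0 \<longrightarrow>
                (\<exists>Lp Lm. ((\<lambda>N::int. \<phi> (mat_int_pow_apply A N \<gamma>)) \<longlongrightarrow> Lp) at_top \<and>
                         ((\<lambda>N::int. \<phi> (mat_int_pow_apply A N \<gamma>)) \<longlongrightarrow> Lm) at_bot \<and>
                         Lm - Lp = 1))))"
proof (intro conjI allI impI)
  assume "\<forall>\<gamma>. \<gamma> \<noteq> 0 \<longrightarrow> bilateral_summable (\<lambda>j. g (mat_int_pow_apply A j \<gamma>))"
  then show "\<exists>\<phi>. \<forall>\<gamma>. \<gamma> \<noteq> 0 \<longrightarrow> g \<gamma> = \<phi> \<gamma> - \<phi> (A *v \<gamma>)"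
    by (rule coboundary_exists_if_bilateral_summable)
next
  fix \<phi> :: "real^'n \<Rightarrow> complex" and \<gamma> :: "real^'n"
  assume "\<forall>\<gamma>. \<gamma> \<noteq> 0 \<longrightarrow> g \<gamma> = \<phi> \<gamma> - \<phi> (A *v \<gamma>)" and "\<gamma> \<noteq> 0"
  with assms show "bilateral_summable (\<lambda>j. g (mat_int_pow_apply A j \<gamma>)) \<longleftrightarrow>
        (\<exists>L. ((\<lambda>N. \<phi> (mat_int_pow_apply A N \<gamma>)) \<longlongrightarrow> L) at_top) \<and>
        (\<exists>L. ((\<lambda>N. \<phi> (mat_int_pow_apply A N \<gamma>)) \<longlongrightarrow> L) at_bot)"
    by (rule bilateral_summable_orbit_iff)
next
  fix \<phi> :: "real^'n \<Rightarrow> complex"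
  assume "\<forall>\<gamma>. \<gamma> \<noteq> 0 \<longrightarrow> g \<gamma> = \<phi> \<gamma> - \<phi> (A *v \<gamma>)"
  from bilateral_sums_orbit_iff[OF assms this]
  show "(\<forall>\<gamma>. \<gamma> \<noteq> 0 \<longrightarrow> bilateral_sums (\<lambda>j. g (mat_int_pow_apply A j \<gamma>)) 1) \<longleftrightarrow>
        (\<forall>\<gamma>. \<gamma> \<noteq> 0 \<longrightarrow> (\<exists>Lp Lm. ((\<lambda>N. \<phi> (mat_int_pow_apply A N \<gamma>)) \<longlongrightarrow> Lp) at_top \<and>
                ((\<lambda>N. \<phi> (mat_int_pow_apply A N \<gamma>)) \<longlongrightarrow> Lm) at_bot \<and> Lm - Lp = 1))"
    by simp
qed

end
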